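(* Let $X_1,\dots,X_k$ be real random variables defined on a common probability space. If for all $a_1,\dots,a_k\in\mathbb{R}_+$ the linear combination $a_1X_1+\dots+a_kX_k$ is a centered Gaussian random variable, then $(X_1,\dots,X_k)$ is a centered Gaussian random vector. *)

theory Defs
  imports "HOL-Probability.Probability"
begin

definition centered_gaussian_rv :: "'a measure \<Rightarrow> ('a \<Rightarrow> real) \<Rightarrow> bool" where
  "centered_gaussian_rv M X \<longleftrightarrow>
     X \<in> borel_measurable M \<and>
     ((AE \<omega> in M. X \<omega> = 0) \<or>
      (\<exists>\<sigma>>0. distributed M lborel X (\<lambda>x. ennreal (normal_density 0 \<sigma> x))))"

definition centered_gaussian_vector :: "'a measure \<Rightarrow> nat \<Rightarrow> (nat \<Rightarrow> 'a \<Rightarrow> real) \<Rightarrow> bool" where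
  "centered_gaussian_vector M k X \<longleftrightarrow>
     (\<forall>i<k. X i \<in> borel_measurable M) \<and>
     (\<forall>a :: nat \<Rightarrow> real. centered_gaussian_rv M (\<lambda>\<omega>. \<Sum>i<k. a i * X i \<omega>))"

end

theory Submission
  imports Defs "HOL-Complex_Analysis.Complex_Analysis"
begin

text \<open>Write \<open>a = a\<^sup>+ - a\<^sup>-\<close>, \<open>U = \<Sum> a\<^sup>+\<^sub>i X\<^sub>i\<close> and \<open>V = \<Sum> a\<^sup>-\<^sub>i X\<^sub>i\<close>.
  For \<open>z \<ge> 0\<close> the variable \<open>U + z V\<close> is centered Gaussian, so
  \<open>E exp (i t (U + z V)) = exp (- t\<^sup>2 q(z) / 2)\<close>, where \<open>q(z) = E (U + z V)\<^sup>2\<close> is a quadratic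
  polynomial in \<open>z\<close>. Gaussian variables have exponential moments of every order, so
  \<open>w \<mapsto> E exp (i t (U + w V))\<close> is entire; it agrees with the entire function
  \<open>exp (- t\<^sup>2 q(w) / 2)\<close> on \<open>[0, \<infinity>)\<close>, hence also at \<open>w = -1\<close>. Thus \<open>U - V = \<Sum> a\<^sub>i X\<^sub>i\<close> has
  the characteristic function of \<open>N(0, q(-1))\<close>, and Levy's uniqueness theorem identifies its law.\<close>

lemma centered_gaussian_rv_measurable:
  "centered_gaussian_rv M Y \<Longrightarrow> Y \<in> borel_measurable M"
  unfolding centered_gaussian_rv_def by blast

lemma centered_gaussian_rvE:
  assumes "centered_gaussian_rv M Y"
  obtains "AE \<omega> in M. Y \<omega> = 0"
  | \<sigma> where "\<sigma> > 0" "distributed M lborel Y (\<lambda>x. ennreal (normal_density 0 \<sigma> x))"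
  using assms unfolding centered_gaussian_rv_def by blast

lemma char_return_zero: "char (return borel (0::real)) t = 1"
  unfolding char_def by (subst integral_return) simp_all

lemma char_normal_density:
  assumes "\<sigma> > 0"
  shows "char (density lborel (\<lambda>x. ennreal (normal_density 0 \<sigma> x))) t
           = complex_of_real (exp (- (t\<^sup>2 * \<sigma>\<^sup>2) / 2))"
proof -
  interpret S: prob_space std_normal_distribution by (rule prob_space_normal_density) simp
  have "distributed std_normal_distribution lborel (\<lambda>x. x) (\<lambda>x. ennreal (std_normal_density x))"
    unfolding distributed_def by (simp add: distr_id2)
  from S.normal_density_affine[OF this, of \<sigma> 0] assms
  have "density lborel (\<lambda>x. ennreal (normal_density 0 \<sigma> x))
          = distr std_normal_distribution lborel (\<lambda>x. \<sigma> * x)"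
    unfolding distributed_def by simp
  then have "char (density lborel (\<lambda>x. ennreal (normal_density 0 \<sigma> x))) t
               = char std_normal_distribution (t * \<sigma>)"
    unfolding char_def by (simp add: integral_distr mult.assoc)
  then show ?thesis by (simp add: char_std_normal_distribution power_mult_distrib)
qed

text \<open>Completing the square, \<open>c \<bar>x\<bar> \<le> c\<^sup>2\<sigma>\<^sup>2 + x\<^sup>2/(4\<sigma>\<^sup>2)\<close>: the Gaussian weight absorbs
  \<open>exp (c \<bar>x\<bar>)\<close> at the cost of doubling the variance.\<close>
lemma normal_density_mult_exp_abs_le:
  fixes c x \<sigma> :: real
  assumes "\<sigma> > 0"
  shows "normal_density 0 \<sigma> x * exp (c * \<bar>x\<bar>)
           \<le> exp (c\<^sup>2 * \<sigma>\<^sup>2) * sqrt 2 * normal_density 0 (sqrt 2 * \<sigma>) x"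
proof -
  have "0 \<le> (\<bar>c\<bar> * \<sigma> - \<bar>x\<bar> / (2 * \<sigma>))\<^sup>2" by simp
  also have "\<dots> = c\<^sup>2 * \<sigma>\<^sup>2 + x\<^sup>2 / (4 * \<sigma>\<^sup>2) - \<bar>c\<bar> * \<bar>x\<bar>"
    using assms by (simp add: power2_eq_square field_simps)
  finally have "c * \<bar>x\<bar> \<le> c\<^sup>2 * \<sigma>\<^sup>2 + x\<^sup>2 / (4 * \<sigma>\<^sup>2)"
    by (smt (verit) abs_ge_self abs_ge_zero mult_right_mono)
  moreover have "- (x\<^sup>2) / (2 * \<sigma>\<^sup>2) = - (x\<^sup>2) / (4 * \<sigma>\<^sup>2) - x\<^sup>2 / (4 * \<sigma>\<^sup>2)"
    using assms by (simp add: field_simps)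
  ultimately have bound: "exp (- (x\<^sup>2) / (2 * \<sigma>\<^sup>2)) * exp (c * \<bar>x\<bar>)
                            \<le> exp (c\<^sup>2 * \<sigma>\<^sup>2) * exp (- (x\<^sup>2) / (4 * \<sigma>\<^sup>2))"
    unfolding exp_add[symmetric] by simp
  have norm_const: "sqrt 2 * (1 / sqrt (2 * pi * (sqrt 2 * \<sigma>)\<^sup>2)) = 1 / sqrt (2 * pi * \<sigma>\<^sup>2)"
    using assms by (simp add: real_sqrt_mult field_simps power2_eq_square)
  have "normal_density 0 \<sigma> x * exp (c * \<bar>x\<bar>)
          = 1 / sqrt (2 * pi * \<sigma>\<^sup>2) * (exp (- (x\<^sup>2) / (2 * \<sigma>\<^sup>2)) * exp (c * \<bar>x\<bar>))"
    unfolding normal_density_def by simp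
  also have "\<dots> \<le> 1 / sqrt (2 * pi * \<sigma>\<^sup>2) * (exp (c\<^sup>2 * \<sigma>\<^sup>2) * exp (- (x\<^sup>2) / (4 * \<sigma>\<^sup>2)))"
    by (rule mult_left_mono[OF bound]) simp
  also have "\<dots> = exp (c\<^sup>2 * \<sigma>\<^sup>2) * sqrt 2 * normal_density 0 (sqrt 2 * \<sigma>) x"
    unfolding normal_density_def norm_const[symmetric] by (simp add: power_mult_distrib)
  finally show ?thesis .
qed

lemma centered_gaussian_rv_integrable_exp_abs:
  assumes "prob_space M" and "centered_gaussian_rv M Y"
  shows "integrable M (\<lambda>\<omega>. exp (c * \<bar>Y \<omega>\<bar>))"
proof -
  interpret prob_space M by fact
  have [measurable]: "Y \<in> borel_measurable M"
    using assms(2) by (rule centered_gaussian_rv_measurable)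
  from assms(2) show ?thesis
  proof (cases rule: centered_gaussian_rvE)
    case 1
    then have "AE \<omega> in M. 1 = exp (c * \<bar>Y \<omega>\<bar>)" by eventually_elim simp
    then show ?thesis by (rule integrable_cong_AE_imp[rotated 2]) simp_all
  next
    case (2 \<sigma>)
    have "integrable lborel (\<lambda>x. normal_density 0 \<sigma> x * exp (c * \<bar>x\<bar>))"
    proof (rule Bochner_Integration.integrable_bound)
      show "integrable lborel (\<lambda>x. exp (c\<^sup>2 * \<sigma>\<^sup>2) * sqrt 2 * normal_density 0 (sqrt 2 * \<sigma>) x)"
        by (intro integrable_mult_right integrable_normal_density)
           (use \<open>\<sigma> > 0\<close> in simp)
      show "AE x in lborel. norm (normal_density 0 \<sigma> x * exp (c * \<bar>x\<bar>))
              \<le> norm (exp (c\<^sup>2 * \<sigma>\<^sup>2) * sqrt 2 * normal_density 0 (sqrt 2 * \<sigma>) x)"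
        using normal_density_mult_exp_abs_le[OF \<open>\<sigma> > 0\<close>] by (simp add: abs_mult)
    qed simp
    then show ?thesis
      using distributed_integrable[OF 2(2), of "\<lambda>x. exp (c * \<bar>x\<bar>)"] by simp
  qed
qed

lemma centered_gaussian_rv_integrable_square:
  assumes "prob_space M" and "centered_gaussian_rv M Y"
  shows "integrable M (\<lambda>\<omega>. (Y \<omega>)\<^sup>2)"
proof (rule Bochner_Integration.integrable_bound)
  show "integrable M (\<lambda>\<omega>. exp (2 * \<bar>Y \<omega>\<bar>))"
    using assms by (rule centered_gaussian_rv_integrable_exp_abs)
  have [measurable]: "Y \<in> borel_measurable M"
    using assms(2) by (rule centered_gaussian_rv_measurable)
  show "(\<lambda>\<omega>. (Y \<omega>)\<^sup>2) \<in> borel_measurable M" by measurable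
  have "y\<^sup>2 \<le> exp (2 * \<bar>y\<bar>)" for y :: real
  proof -
    have "y\<^sup>2 = \<bar>y\<bar>\<^sup>2" by simp
    also have "\<dots> \<le> (1 + \<bar>y\<bar>)\<^sup>2" by (rule power_mono) simp_all
    also have "\<dots> \<le> (exp \<bar>y\<bar>)\<^sup>2" by (simp add: power_mono exp_ge_add_one_self)
    finally show ?thesis by (simp add: exp_double)
  qed
  then show "AE \<omega> in M. norm ((Y \<omega>)\<^sup>2) \<le> norm (exp (2 * \<bar>Y \<omega>\<bar>))" by simp
qed

lemma integral_iexp_centered_gaussian_rv:
  assumes "prob_space M" and "centered_gaussian_rv M Y"
  shows "(CLINT \<omega>|M. iexp (t * Y \<omega>))
           = complex_of_real (exp (- (t\<^sup>2 * (LINT \<omega>|M. (Y \<omega>)\<^sup>2)) / 2))"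
proof -
  interpret prob_space M by fact
  have [measurable]: "Y \<in> borel_measurable M"
    using assms(2) by (rule centered_gaussian_rv_measurable)
  from assms(2) show ?thesis
  proof (cases rule: centered_gaussian_rvE)
    case 1
    have "(CLINT \<omega>|M. iexp (t * Y \<omega>)) = (CLINT \<omega>|M. 1)"
      by (rule integral_cong_AE) (use 1 in \<open>auto elim: AE_mp\<close>)
    moreover have "(LINT \<omega>|M. (Y \<omega>)\<^sup>2) = (LINT \<omega>|M. 0)"
      by (rule integral_cong_AE) (use 1 in \<open>auto elim: AE_mp\<close>)
    ultimately show ?thesis by (simp add: prob_space)
  next
    case (2 \<sigma>)
    then have "distr M lborel Y = density lborel (\<lambda>x. ennreal (normal_density 0 \<sigma> x))"
      unfolding distributed_def by simp
    moreover have "(CLINT \<omega>|M. iexp (t * Y \<omega>)) = (CLINT x|distr M lborel Y. iexp (t * x))"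
      by (rule integral_distr[symmetric]) simp_all
    ultimately have "(CLINT \<omega>|M. iexp (t * Y \<omega>)) = complex_of_real (exp (- (t\<^sup>2 * \<sigma>\<^sup>2) / 2))"
      using char_normal_density[OF \<open>\<sigma> > 0\<close>, of t] unfolding char_def by simp
    moreover have "(LINT \<omega>|M. (Y \<omega>)\<^sup>2) = \<sigma>\<^sup>2"
    proof -
      have "(LINT \<omega>|M. (Y \<omega>)\<^sup>2) = (LBINT x. normal_density 0 \<sigma> x * (x - 0) ^ (2 * 1))"
        using distributed_integral[OF 2(2), of "\<lambda>x. x\<^sup>2"] by simp
      also have "\<dots> = fact (2 * 1) / ((2 / \<sigma>\<^sup>2) ^ 1 * fact 1)"
        using \<open>\<sigma> > 0\<close> by (rule integral_normal_moment_even)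
      finally show ?thesis by (simp add: numeral_2_eq_2)
    qed
    ultimately show ?thesis by simp
  qed
qed

lemma distr_eq_if_integral_iexp_eq_char:
  assumes "prob_space M" and [measurable]: "Y \<in> borel_measurable M" and "real_distribution N"
    and "\<And>t. (CLINT \<omega>|M. iexp (t * Y \<omega>)) = char N t"
  shows "distr M borel Y = N"
proof (rule Levy_uniqueness)
  interpret prob_space M by fact
  show "real_distribution (distr M borel Y)" by simp
  have "char (distr M borel Y) t = (CLINT \<omega>|M. iexp (t * Y \<omega>))" for t
    unfolding char_def by (rule integral_distr) simp_all
  then show "char (distr M borel Y) = char N" using assms(4) by (simp add: fun_eq_iff)
qed fact

lemma centered_gaussian_rvI_integral_iexp:
  assumes "prob_space M" and [measurable]: "Y \<in> borel_measurable M" and "v \<ge> 0"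
    and iexp: "\<And>t. (CLINT \<omega>|M. iexp (t * Y \<omega>)) = complex_of_real (exp (- (t\<^sup>2 * v) / 2))"
  shows "centered_gaussian_rv M Y"
proof (cases "v = 0")
  case True
  have "distr M borel Y = return borel 0"
    by (rule distr_eq_if_integral_iexp_eq_char[OF assms(1,2)])
       (use iexp True in \<open>simp_all add: real_distribution_def real_distribution_axioms_def
          prob_space_return char_return_zero\<close>)
  then have "AE x in distr M borel Y. x = 0" by (simp only:) (subst AE_return; simp)
  then have "AE \<omega> in M. Y \<omega> = 0" by (simp add: AE_distr_iff)
  then show ?thesis unfolding centered_gaussian_rv_def by simp
next
  case False
  define \<sigma> where "\<sigma> = sqrt v"
  have "\<sigma> > 0" "\<sigma>\<^sup>2 = v" using \<open>v \<ge> 0\<close> False by (simp_all add: \<sigma>_def)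
  have "distr M borel Y = density lborel (\<lambda>x. ennreal (normal_density 0 \<sigma> x))"
    by (rule distr_eq_if_integral_iexp_eq_char[OF assms(1,2)])
       (use iexp \<open>\<sigma> > 0\<close> \<open>\<sigma>\<^sup>2 = v\<close> in \<open>simp_all add: real_distribution_def
          real_distribution_axioms_def prob_space_normal_density char_normal_density mult.commute\<close>)
  moreover have "distr M lborel Y = distr M borel Y"
    by (rule distr_cong) simp_all
  ultimately have "distributed M lborel Y (\<lambda>x. ennreal (normal_density 0 \<sigma> x))"
    unfolding distributed_def by simp
  then show ?thesis unfolding centered_gaussian_rv_def using \<open>\<sigma> > 0\<close> by auto
qed

lemma norm_sum_exp_terms_le:
  fixes a :: "'b::{real_normed_field,banach}"
  assumes "finite I"
  shows "norm (\<Sum>n\<in>I. a ^ n / fact n) \<le> exp (norm a)"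
proof -
  have "norm (\<Sum>n\<in>I. a ^ n / fact n) \<le> (\<Sum>n\<in>I. norm a ^ n / fact n)"
    by (rule order_trans[OF norm_sum]) (simp add: norm_divide norm_power)
  also have "\<dots> \<le> (\<Sum>n. norm a ^ n / fact n)"
    by (rule sum_le_suminf[OF _ assms]) (simp_all add: summable_exp divide_inverse_commute)
  also have "\<dots> = exp (norm a)"
    using exp_converges[of "norm a"] by (simp add: sums_iff divide_inverse_commute)
  finally show ?thesis .
qed

lemma integral_mult_exp_sums:
  fixes f V :: "'a \<Rightarrow> complex"
  assumes [measurable]: "f \<in> borel_measurable M" "V \<in> borel_measurable M"
    and f_bound: "\<And>\<omega>. norm (f \<omega>) \<le> K"
    and exp_moments: "\<And>c. integrable M (\<lambda>\<omega>. exp (c * norm (V \<omega>)))"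
  shows "(\<lambda>n. (CLINT \<omega>|M. f \<omega> * V \<omega> ^ n / fact n) * w ^ n) sums (CLINT \<omega>|M. f \<omega> * exp (w * V \<omega>))"
proof -
  define s where "s N \<omega> = (\<Sum>n<N. f \<omega> * (w * V \<omega>) ^ n / fact n)" for N \<omega>
  define B where "B \<omega> = K * exp (norm w * norm (V \<omega>))" for \<omega>
  have [measurable]: "\<And>N. s N \<in> borel_measurable M" "B \<in> borel_measurable M"
    unfolding s_def B_def by measurable
  have "integrable M B"
    unfolding B_def by (intro integrable_mult_right exp_moments)
  have partial_bound: "norm (\<Sum>n\<in>I. f \<omega> * (w * V \<omega>) ^ n / fact n) \<le> B \<omega>" if "finite I" for I \<omega>
  proof -
    have "norm (\<Sum>n\<in>I. f \<omega> * (w * V \<omega>) ^ n / fact n) = norm (f \<omega> * (\<Sum>n\<in>I. (w * V \<omega>) ^ n / fact n))"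
      by (simp add: sum_distrib_left)
    also have "\<dots> \<le> K * exp (norm (w * V \<omega>))"
      unfolding norm_mult[of "f \<omega>"]
      by (rule mult_mono[OF f_bound norm_sum_exp_terms_le[OF that]])
         (auto intro: order_trans[OF norm_ge_zero f_bound])
    finally show ?thesis by (simp add: B_def norm_mult)
  qed
  have term_integrable: "integrable M (\<lambda>\<omega>. f \<omega> * (w * V \<omega>) ^ n / fact n)" for n
    by (rule Bochner_Integration.integrable_bound[OF \<open>integrable M B\<close>])
       (use partial_bound[of "{n}"] in \<open>auto intro!: AE_I2 order_trans[OF _ abs_ge_self]\<close>)
  have "(\<lambda>N. s N \<omega>) \<longlonglongrightarrow> f \<omega> * exp (w * V \<omega>)" for \<omega>
  proof -
    have "(\<lambda>n. (w * V \<omega>) ^ n / fact n) sums exp (w * V \<omega>)"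
      using exp_converges[of "w * V \<omega>"] by (simp add: scaleR_conv_of_real divide_inverse_commute)
    then have "(\<lambda>n. f \<omega> * ((w * V \<omega>) ^ n / fact n)) sums (f \<omega> * exp (w * V \<omega>))"
      by (rule sums_mult)
    then show ?thesis unfolding s_def sums_def by simp
  qed
  then have "(\<lambda>N. integral\<^sup>L M (s N)) \<longlonglongrightarrow> (CLINT \<omega>|M. f \<omega> * exp (w * V \<omega>))"
    by (intro integral_dominated_convergence[where w=B])
       (use \<open>integrable M B\<close> partial_bound in \<open>auto simp: s_def\<close>)
  moreover have "integral\<^sup>L M (s N) = (\<Sum>n<N. (CLINT \<omega>|M. f \<omega> * V \<omega> ^ n / fact n) * w ^ n)" for N
  proof -
    have "integral\<^sup>L M (s N) = (\<Sum>n<N. CLINT \<omega>|M. f \<omega> * V \<omega> ^ n / fact n * w ^ n)"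
      unfolding s_def using term_integrable
      by (simp add: power_mult_distrib mult_ac)
    then show ?thesis by simp
  qed
  ultimately show ?thesis unfolding sums_def by simp
qed

lemma holomorphic_on_integral_mult_exp:
  fixes f V :: "'a \<Rightarrow> complex"
  assumes "f \<in> borel_measurable M" "V \<in> borel_measurable M"
    and "\<And>\<omega>. norm (f \<omega>) \<le> K"
    and "\<And>c. integrable M (\<lambda>\<omega>. exp (c * norm (V \<omega>)))"
  shows "(\<lambda>w. CLINT \<omega>|M. f \<omega> * exp (w * V \<omega>)) holomorphic_on UNIV"
proof -
  define a where "a n = (CLINT \<omega>|M. f \<omega> * V \<omega> ^ n / fact n)" for n
  have sums: "(\<lambda>n. a n * w ^ n) sums (CLINT \<omega>|M. f \<omega> * exp (w * V \<omega>))" for w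
    unfolding a_def using assms by (rule integral_mult_exp_sums)
  then have "\<And>w. summable (\<lambda>n. a n * w ^ n)" by (blast intro: sums_summable)
  from termdiffs_strong_converges_everywhere[OF this]
  have "(\<lambda>w. \<Sum>n. a n * w ^ n) holomorphic_on UNIV" by (auto simp: holomorphic_on_open)
  moreover have "(\<lambda>w. CLINT \<omega>|M. f \<omega> * exp (w * V \<omega>)) = (\<lambda>w. \<Sum>n. a n * w ^ n)"
    using sums by (simp add: fun_eq_iff sums_unique)
  ultimately show ?thesis by simp
qed

lemma holomorphic_on_integral_exp_i_add_mult:
  fixes U V :: "'a \<Rightarrow> real"
  assumes [measurable]: "U \<in> borel_measurable M" "V \<in> borel_measurable M"
    and exp_moments: "\<And>c. integrable M (\<lambda>\<omega>. exp (c * \<bar>V \<omega>\<bar>))"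
  shows "(\<lambda>w. CLINT \<omega>|M. exp (\<i> * of_real t * (of_real (U \<omega>) + w * of_real (V \<omega>))))
           holomorphic_on UNIV"
proof -
  have "(\<lambda>\<omega>. exp (c * norm (\<i> * t * V \<omega>))) = (\<lambda>\<omega>. exp ((c * \<bar>t\<bar>) * \<bar>V \<omega>\<bar>))" for c
    by (simp add: norm_mult mult.assoc)
  then have "(\<lambda>w. CLINT \<omega>|M. iexp (t * U \<omega>) * exp (w * (\<i> * t * V \<omega>))) holomorphic_on UNIV"
    using exp_moments by (intro holomorphic_on_integral_mult_exp[where K=1]) simp_all
  moreover have "iexp (t * U \<omega>) * exp (w * (\<i> * t * V \<omega>))
                  = exp (\<i> * of_real t * (of_real (U \<omega>) + w * of_real (V \<omega>)))" for w \<omega>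
    by (simp add: exp_add[symmetric] algebra_simps)
  ultimately show ?thesis by simp
qed

lemma integral_square_add_mult:
  fixes U V :: "'a \<Rightarrow> real"
  assumes [measurable]: "U \<in> borel_measurable M" "V \<in> borel_measurable M"
    and "integrable M (\<lambda>\<omega>. (U \<omega>)\<^sup>2)" "integrable M (\<lambda>\<omega>. (V \<omega>)\<^sup>2)"
  shows "(LINT \<omega>|M. (U \<omega> + z * V \<omega>)\<^sup>2)
           = (LINT \<omega>|M. (U \<omega>)\<^sup>2) + 2 * z * (LINT \<omega>|M. U \<omega> * V \<omega>) + z\<^sup>2 * (LINT \<omega>|M. (V \<omega>)\<^sup>2)"
proof -
  have "integrable M (\<lambda>\<omega>. U \<omega> * V \<omega>)"
  proof (rule Bochner_Integration.integrable_bound)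
    show "integrable M (\<lambda>\<omega>. (U \<omega>)\<^sup>2 + (V \<omega>)\<^sup>2)" using assms by simp
    show "AE \<omega> in M. norm (U \<omega> * V \<omega>) \<le> norm ((U \<omega>)\<^sup>2 + (V \<omega>)\<^sup>2)"
    proof (intro AE_I2)
      fix \<omega>
      have "2 * (\<bar>U \<omega>\<bar> * \<bar>V \<omega>\<bar>) \<le> (U \<omega>)\<^sup>2 + (V \<omega>)\<^sup>2"
        using sum_squares_bound[of "\<bar>U \<omega>\<bar>" "\<bar>V \<omega>\<bar>"] by (simp add: mult.assoc)
      moreover have "0 \<le> \<bar>U \<omega>\<bar> * \<bar>V \<omega>\<bar>" by simp
      ultimately have "\<bar>U \<omega>\<bar> * \<bar>V \<omega>\<bar> \<le> (U \<omega>)\<^sup>2 + (V \<omega>)\<^sup>2" by linarith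
      then show "norm (U \<omega> * V \<omega>) \<le> norm ((U \<omega>)\<^sup>2 + (V \<omega>)\<^sup>2)"
        by (simp add: abs_mult)
    qed
  qed simp
  moreover have "(U \<omega> + z * V \<omega>)\<^sup>2 = (U \<omega>)\<^sup>2 + (2 * z) * (U \<omega> * V \<omega>) + z\<^sup>2 * (V \<omega>)\<^sup>2" for \<omega>
    by (simp add: power2_eq_square algebra_simps)
  ultimately show ?thesis
    using assms by simp
qed

lemma entire_eq_if_eq_on_nonneg_reals:
  fixes f g :: "complex \<Rightarrow> complex"
  assumes "f holomorphic_on UNIV" "g holomorphic_on UNIV"
    and "\<And>x. x \<ge> 0 \<Longrightarrow> f (of_real x) = g (of_real x)"
  shows "f w = g w"
proof -
  have "(\<lambda>w. f w - g w) holomorphic_on UNIV"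
    using assms(1,2) by (rule holomorphic_on_diff)
  moreover have "(1::real) islimpt {0..2}" by simp
  then have "of_real 1 islimpt (of_real ` {0..2} :: complex set)"
    by (rule islimpt_isCont_image) (auto simp: eventually_at_filter)
  then have "(1::complex) islimpt of_real ` {0..}"
    by (auto intro: islimpt_subset)
  ultimately have "f w - g w = 0"
    by (rule analytic_continuation[OF _ open_UNIV connected_UNIV subset_UNIV UNIV_I])
       (use assms(3) in auto)
  then show ?thesis by simp
qed

lemma integral_iexp_diff_of_gaussian_ray:
  fixes U V :: "'a \<Rightarrow> real"
  assumes "prob_space M" and "centered_gaussian_rv M V"
    and gaussian_ray: "\<And>z. z \<ge> 0 \<Longrightarrow> centered_gaussian_rv M (\<lambda>\<omega>. U \<omega> + z * V \<omega>)"
  shows "(CLINT \<omega>|M. iexp (t * (U \<omega> - V \<omega>)))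
           = complex_of_real (exp (- (t\<^sup>2 * (LINT \<omega>|M. (U \<omega> - V \<omega>)\<^sup>2)) / 2))"
proof -
  have "centered_gaussian_rv M U" using gaussian_ray[of 0] by simp
  have [measurable]: "U \<in> borel_measurable M" "V \<in> borel_measurable M"
    using \<open>centered_gaussian_rv M U\<close> assms(2) by (simp_all add: centered_gaussian_rv_measurable)
  define A where "A = (LINT \<omega>|M. (U \<omega>)\<^sup>2)"
  define B where "B = (LINT \<omega>|M. U \<omega> * V \<omega>)"
  define C where "C = (LINT \<omega>|M. (V \<omega>)\<^sup>2)"
  have second_moment: "(LINT \<omega>|M. (U \<omega> + z * V \<omega>)\<^sup>2) = A + 2 * z * B + z\<^sup>2 * C" for z
    unfolding A_def B_def C_def
    by (intro integral_square_add_mult centered_gaussian_rv_integrable_square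
        \<open>prob_space M\<close> \<open>centered_gaussian_rv M U\<close> assms(2)) simp_all
  define H where "H w = (CLINT \<omega>|M. exp (\<i> * of_real t * (of_real (U \<omega>) + w * of_real (V \<omega>))))"
    for w
  define R where "R w = exp (- (of_real t)\<^sup>2 / 2 * (of_real A + 2 * w * of_real B + w\<^sup>2 * of_real C))"
    for w :: complex
  have "H holomorphic_on UNIV"
    unfolding H_def using centered_gaussian_rv_integrable_exp_abs[OF \<open>prob_space M\<close> assms(2)]
    by (intro holomorphic_on_integral_exp_i_add_mult) simp_all
  moreover have "R holomorphic_on UNIV"
    unfolding R_def by (intro holomorphic_intros)
  moreover have "H (of_real z) = R (of_real z)" if "z \<ge> 0" for z
  proof -
    have "H (of_real z) = (CLINT \<omega>|M. iexp (t * (U \<omega> + z * V \<omega>)))"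
      unfolding H_def by (simp add: algebra_simps)
    also have "\<dots> = complex_of_real (exp (- (t\<^sup>2 * (A + 2 * z * B + z\<^sup>2 * C)) / 2))"
      using integral_iexp_centered_gaussian_rv[OF \<open>prob_space M\<close> gaussian_ray[OF that]]
      by (simp add: second_moment)
    also have "\<dots> = R (of_real z)"
      unfolding R_def exp_of_real[symmetric] by simp
    finally show ?thesis .
  qed
  ultimately have "H (-1) = R (-1)"
    by (rule entire_eq_if_eq_on_nonneg_reals)
  moreover have "H (-1) = (CLINT \<omega>|M. iexp (t * (U \<omega> - V \<omega>)))"
    unfolding H_def by (simp add: algebra_simps)
  moreover have "(LINT \<omega>|M. (U \<omega> - V \<omega>)\<^sup>2) = A - 2 * B + C"
    using second_moment[of "-1"] by simp
  ultimately show ?thesis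
    unfolding R_def exp_of_real[symmetric] by simp
qed

lemma centered_gaussian_rv_diff:
  fixes U V :: "'a \<Rightarrow> real"
  assumes "prob_space M" and "centered_gaussian_rv M V"
    and "\<And>z. z \<ge> 0 \<Longrightarrow> centered_gaussian_rv M (\<lambda>\<omega>. U \<omega> + z * V \<omega>)"
  shows "centered_gaussian_rv M (\<lambda>\<omega>. U \<omega> - V \<omega>)"
proof (rule centered_gaussian_rvI_integral_iexp)
  have "U \<in> borel_measurable M" "V \<in> borel_measurable M"
    using assms(2) assms(3)[of 0] by (simp_all add: centered_gaussian_rv_measurable)
  then show "(\<lambda>\<omega>. U \<omega> - V \<omega>) \<in> borel_measurable M" by measurable
  show "(CLINT \<omega>|M. iexp (t * (U \<omega> - V \<omega>)))
          = complex_of_real (exp (- (t\<^sup>2 * (LINT \<omega>|M. (U \<omega> - V \<omega>)\<^sup>2)) / 2))" for t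
    using assms by (rule integral_iexp_diff_of_gaussian_ray)
qed (use assms(1) in simp_all)

theorem lemmaA1:
  fixes M :: "'a measure" and k :: nat and X :: "nat \<Rightarrow> 'a \<Rightarrow> real"
  assumes "prob_space M"
    and "\<And>i. i < k \<Longrightarrow> X i \<in> borel_measurable M"
    and "\<And>a :: nat \<Rightarrow> real. (\<forall>i<k. a i \<ge> 0) \<Longrightarrow>
           centered_gaussian_rv M (\<lambda>\<omega>. \<Sum>i<k. a i * X i \<omega>)"
  shows "centered_gaussian_vector M k X"
proof -
  have "centered_gaussian_rv M (\<lambda>\<omega>. \<Sum>i<k. a i * X i \<omega>)" for a
  proof -
    define U where "U \<omega> = (\<Sum>i<k. max (a i) 0 * X i \<omega>)" for \<omega>
    define V where "V \<omega> = (\<Sum>i<k. max (- a i) 0 * X i \<omega>)" for \<omega>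
    have parts: "max (a i) 0 - max (- a i) 0 = a i" for i by auto
    have "centered_gaussian_rv M (\<lambda>\<omega>. U \<omega> - V \<omega>)"
    proof (rule centered_gaussian_rv_diff[OF assms(1)])
      show "centered_gaussian_rv M V" unfolding V_def by (rule assms(3)) simp
      fix z :: real assume "z \<ge> 0"
      have "(\<lambda>\<omega>. U \<omega> + z * V \<omega>) = (\<lambda>\<omega>. \<Sum>i<k. (max (a i) 0 + z * max (- a i) 0) * X i \<omega>)"
        unfolding U_def V_def by (simp add: sum_distrib_left sum.distrib[symmetric] algebra_simps)
      then show "centered_gaussian_rv M (\<lambda>\<omega>. U \<omega> + z * V \<omega>)"
        using assms(3) \<open>z \<ge> 0\<close> by simp
    qed
    moreover have "(\<lambda>\<omega>. U \<omega> - V \<omega>) = (\<lambda>\<omega>. \<Sum>i<k. a i * X i \<omega>)"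
      unfolding U_def V_def by (simp add: sum_subtractf[symmetric] left_diff_distrib[symmetric] parts)
    ultimately show ?thesis by simp
  qed
  then show ?thesis unfolding centered_gaussian_vector_def using assms(2) by blast
qed

end
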